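(* Let $n,m,k$ be nonnegative integers with $m\le n$ and $k\ge 1$. If $p$ is a prime with $p>3$, then $$\binom{np^k}{mp^k}\equiv \binom{np^{\lfloor (k-1)/3\rfloor}}{mp^{\lfloor (k-1)/3\rfloor}}\pmod{p^k}.$$ Furthermore, $$\binom{n\cdot 2^k}{m\cdot 2^k}\equiv \binom{n\cdot 2^{\lfloor k/2\rfloor}}{m\cdot 2^{\lfloor k/2\rfloor}}\pmod{2^k}\quad\text{and}\quad \binom{n\cdot 3^k}{m\cdot 3^k}\equiv \binom{n\cdot 3^{\lfloor (k-1)/2\rfloor}}{m\cdot 3^{\lfloor (k-1)/2\rfloor}}\pmod{3^k}.$$
   Context: $\lfloor a\rfloor$ denotes the greatest integer less than or equal to $a$. *)

theory Defs
  imports "HOL-Number_Theory.Number_Theory"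
begin

end

theory Submission
  imports Defs
begin

text \<open>Let \<open>q = p\<^sup>s = p q'\<close>. Splitting off the multiples of \<open>p\<close> writes \<open>(q x)!\<close> as
  \<open>p\<^bsup>q' x\<^esup> (q' x)!\<close> times the product of the units up to \<open>q x\<close>, and that product consists of
  the \<open>x\<close> blocks \<open>f (c q) = \<Prod> (c q + j)\<close>, \<open>j\<close> ranging over the units up to \<open>q\<close>. Hence
  \<open>(q x choose q y) \<equiv> (q' x choose q' y)\<close> modulo every power of \<open>p\<close> modulo which all blocks
  agree with \<open>f 0\<close>. They do modulo \<open>q\<close> trivially. Pairing \<open>j\<close> with \<open>q - j\<close> gives
  \<open>f (c q) = \<Prod> (c (c + 1) q\<^sup>2 + j (q - j))\<close>, so they agree modulo \<open>q\<^sup>2\<close> unless \<open>q / 2\<close> is a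
  unit, and modulo \<open>q\<^sup>3\<close> if moreover \<open>q\<close> divides the linear coefficient
  \<open>\<Sum>\<^sub>j \<Prod>\<^sub>i\<^sub>\<noteq>\<^sub>j i (q - i)\<close>. For \<open>p > 3\<close> that coefficient is, modulo \<open>q\<close>, a unit times
  \<open>\<Sum> j\<^sup>-\<^sup>2 = \<Sum> j\<^sup>2 \<equiv> 0\<close>. Descending one power of \<open>p\<close> at a time from \<open>k\<close> gives the three
  congruences.\<close>

definition coprime_upto :: "nat \<Rightarrow> nat \<Rightarrow> nat set" where
  "coprime_upto p N = {j \<in> {1..N}. \<not> p dvd j}"

definition pfree_fact :: "nat \<Rightarrow> nat \<Rightarrow> nat" where
  "pfree_fact p N = \<Prod>(coprime_upto p N)"

definition block_prod :: "nat \<Rightarrow> nat \<Rightarrow> nat \<Rightarrow> nat" where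
  "block_prod p q t = (\<Prod>j\<in>coprime_upto p q. t + j)"

definition lower_half :: "nat \<Rightarrow> nat \<Rightarrow> nat set" where
  "lower_half p q = {j \<in> coprime_upto p q. 2 * j < q}"

lemma finite_coprime_upto [simp]: "finite (coprime_upto p N)"
  by (simp add: coprime_upto_def)

lemma finite_lower_half [simp]: "finite (lower_half p q)"
  by (simp add: lower_half_def)

lemma lower_half_le: "j \<in> lower_half p q \<Longrightarrow> j \<le> q"
  by (simp add: lower_half_def coprime_upto_def)

lemma coprime_upto_Suc:
  "coprime_upto p (Suc N) = (if p dvd Suc N then coprime_upto p N else insert (Suc N) (coprime_upto p N))"
  by (auto simp: coprime_upto_def le_Suc_eq)

lemma fact_eq_pfree_fact:
  assumes "p > 0"
  shows "fact N = p ^ (N div p) * fact (N div p) * pfree_fact p N"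
proof (induction N)
  case 0
  then show ?case by (simp add: pfree_fact_def coprime_upto_def)
next
  case (Suc N)
  show ?case
  proof (cases "p dvd Suc N")
    case True
    then have Suc_div: "Suc N div p = Suc (N div p)"
      using assms by (simp add: div_Suc dvd_eq_mod_eq_0)
    then have "Suc N = p * Suc (N div p)"
      using True by (metis dvd_mult_div_cancel)
    then have "fact (Suc N) = p * Suc (N div p) * (p ^ (N div p) * fact (N div p) * pfree_fact p N)"
      using Suc by (metis fact_Suc of_nat_id)
    then show ?thesis
      using True by (simp add: Suc_div pfree_fact_def coprime_upto_Suc algebra_simps)
  next
    case False
    then have "Suc N div p = N div p"
      using assms by (simp add: div_Suc dvd_eq_mod_eq_0)
    moreover have "Suc N \<notin> coprime_upto p N"
      by (simp add: coprime_upto_def)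
    then have "pfree_fact p (Suc N) = Suc N * pfree_fact p N"
      using False by (simp add: pfree_fact_def coprime_upto_Suc)
    ultimately show ?thesis
      using Suc by (simp add: algebra_simps)
  qed
qed

lemma pfree_fact_add:
  assumes "p dvd N"
  shows "pfree_fact p (N + q) = pfree_fact p N * block_prod p q N"
proof -
  have units_split: "coprime_upto p (N + q) = coprime_upto p N \<union> (\<lambda>i. N + i) ` coprime_upto p q"
  proof (intro equalityI subsetI)
    fix j assume j: "j \<in> coprime_upto p (N + q)"
    show "j \<in> coprime_upto p N \<union> (\<lambda>i. N + i) ` coprime_upto p q"
    proof (cases "j \<le> N")
      case False
      then have "j - N \<in> coprime_upto p q"
        using j assms by (auto simp: coprime_upto_def) (metis dvd_add le_add_diff_inverse nat_le_linear)
      then show ?thesis using False by (auto intro: image_eqI[of j _ "j - N"])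
    qed (use j in \<open>auto simp: coprime_upto_def\<close>)
  next
    fix j assume "j \<in> coprime_upto p N \<union> (\<lambda>i. N + i) ` coprime_upto p q"
    then show "j \<in> coprime_upto p (N + q)"
      using assms by (auto simp: coprime_upto_def dvd_add_right_iff)
  qed
  have "pfree_fact p (N + q) = pfree_fact p N * \<Prod>((\<lambda>i. N + i) ` coprime_upto p q)"
    unfolding pfree_fact_def units_split
    by (rule prod.union_disjoint) (auto simp: coprime_upto_def)
  also have "\<Prod>((\<lambda>i. N + i) ` coprime_upto p q) = block_prod p q N"
    unfolding block_prod_def by (subst prod.reindex) (auto simp: inj_on_def)
  finally show ?thesis .
qed

lemma pfree_fact_mult_cong:
  assumes "p dvd q" and block: "\<And>c. [block_prod p q (c * q) = block_prod p q 0] (mod M)"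
  shows "[pfree_fact p (q * x) = block_prod p q 0 ^ x] (mod M)"
proof (induction x)
  case 0
  then show ?case by (simp add: pfree_fact_def coprime_upto_def)
next
  case (Suc x)
  have "pfree_fact p (q * Suc x) = pfree_fact p (q * x) * block_prod p q (x * q)"
    using pfree_fact_add[of p "q * x" q] assms(1) by (simp add: algebra_simps)
  also have "[\<dots> = block_prod p q 0 ^ x * block_prod p q 0] (mod M)"
    by (intro cong_mult Suc block)
  finally show ?case by (simp add: mult.commute)
qed

lemma coprime_block_prod_0:
  assumes "prime p"
  shows "coprime (block_prod p q 0) p"
  unfolding block_prod_def
proof (rule prod_coprime_left)
  fix i assume "i \<in> coprime_upto p q"
  then have "coprime p i"
    using prime_imp_coprime[OF assms] by (simp add: coprime_upto_def)
  then show "coprime (0 + i) p" by (simp add: coprime_commute)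
qed

text \<open>The powers of \<open>p\<close> split off the three factorials cancel exactly.\<close>

lemma binomial_mult_pfree_fact_eq:
  assumes "p > 0" and q: "q = p * q'" and "y \<le> x"
  shows "((q * x) choose (q * y)) * (pfree_fact p (q * y) * pfree_fact p (q * (x - y)))
       = ((q' * x) choose (q' * y)) * pfree_fact p (q * x)"
proof -
  have fact_split: "fact (q * z) = p ^ (q' * z) * fact (q' * z) * pfree_fact p (q * z)" for z
    using fact_eq_pfree_fact[OF \<open>p > 0\<close>, of "q * z"] \<open>p > 0\<close> q by simp
  have binom: "fact (r * y) * fact (r * (x - y)) * ((r * x) choose (r * y)) = (fact (r * x) :: nat)" for r
    using binomial_fact_lemma[of "r * y" "r * x"] \<open>y \<le> x\<close> by (simp add: diff_mult_distrib2)
  have pow: "p ^ (q' * y) * p ^ (q' * (x - y)) = p ^ (q' * x)"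
    using \<open>y \<le> x\<close> by (simp add: power_add[symmetric] diff_mult_distrib2)
  define K where "K = p ^ (q' * x) * fact (q' * y) * fact (q' * (x - y))"
  have "K \<noteq> 0" unfolding K_def using \<open>p > 0\<close> by simp
  have "((q * x) choose (q * y)) * (pfree_fact p (q * y) * pfree_fact p (q * (x - y))) * K
      = fact (q * y) * fact (q * (x - y)) * ((q * x) choose (q * y))"
    unfolding K_def fact_split pow[symmetric] by (simp add: algebra_simps)
  also have "\<dots> = p ^ (q' * x) * fact (q' * x) * pfree_fact p (q * x)"
    unfolding binom by (rule fact_split)
  also have "\<dots> = ((q' * x) choose (q' * y)) * pfree_fact p (q * x) * K"
    unfolding K_def binom[symmetric] by (simp add: algebra_simps)
  finally show ?thesis using \<open>K \<noteq> 0\<close> by simp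
qed

lemma binomial_mult_cong:
  assumes "p > 0" "q = p * q'" "y \<le> x"
    and block: "\<And>c. [block_prod p q (c * q) = block_prod p q 0] (mod M)"
    and "coprime (block_prod p q 0) M"
  shows "[(q * x) choose (q * y) = (q' * x) choose (q' * y)] (mod M)"
proof -
  let ?f = "block_prod p q 0" and ?C = "(q * x) choose (q * y)" and ?C' = "(q' * x) choose (q' * y)"
  have "p dvd q" using assms(2) by simp
  note pfree = pfree_fact_mult_cong[OF this block]
  have "?C * ?f ^ x = ?C * (?f ^ y * ?f ^ (x - y))"
    using \<open>y \<le> x\<close> by (simp flip: power_add)
  also have "[\<dots> = ?C * (pfree_fact p (q * y) * pfree_fact p (q * (x - y)))] (mod M)"
    by (intro cong_mult cong_refl cong_sym[OF pfree])
  also have "?C * (pfree_fact p (q * y) * pfree_fact p (q * (x - y))) = ?C' * pfree_fact p (q * x)"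
    by (rule binomial_mult_pfree_fact_eq[OF assms(1-3)])
  also have "[\<dots> = ?C' * ?f ^ x] (mod M)"
    by (intro cong_mult cong_refl pfree)
  finally show ?thesis
    using cong_mult_rcancel_nat assms(5) by (metis coprime_power_left_iff)
qed

lemma binomial_prime_power_step_cong:
  assumes "prime p" "s \<ge> 1" "y \<le> x"
    and "\<And>c. [block_prod p (p ^ s) (c * p ^ s) = block_prod p (p ^ s) 0] (mod p ^ e)"
  shows "[(x * p ^ s) choose (y * p ^ s) = (x * p ^ (s - 1)) choose (y * p ^ (s - 1))] (mod p ^ e)"
proof -
  have "p ^ s = p * p ^ (s - 1)" using \<open>s \<ge> 1\<close> by (cases s) auto
  moreover have "coprime (block_prod p (p ^ s) 0) (p ^ e)"
    using coprime_block_prod_0[OF \<open>prime p\<close>] by simp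
  ultimately have "[(p ^ s * x) choose (p ^ s * y) = (p ^ (s - 1) * x) choose (p ^ (s - 1) * y)] (mod p ^ e)"
    using binomial_mult_cong[OF prime_gt_0_nat[OF \<open>prime p\<close>] _ \<open>y \<le> x\<close> assms(4)] by blast
  then show ?thesis by (simp add: mult.commute)
qed

lemma block_prod_cong_mod: "[block_prod p q (c * q) = block_prod p q 0] (mod q)"
  unfolding block_prod_def by (rule cong_prod) (simp add: cong_def)

lemma prod_add_const_expansion:
  fixes a :: "'b \<Rightarrow> 'a::comm_semiring_1"
  assumes "finite V"
  shows "\<exists>R. (\<Prod>j\<in>V. D + a j) = (\<Prod>j\<in>V. a j) + D * (\<Sum>j\<in>V. \<Prod>i\<in>V - {j}. a i) + D ^ 2 * R"
  using assms
proof (induction V rule: finite_induct)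
  case empty
  show ?case by (rule exI[of _ 0]) simp
next
  case (insert x V)
  define P where "P = (\<Prod>j\<in>V. a j)"
  define S where "S = (\<Sum>j\<in>V. \<Prod>i\<in>V - {j}. a i)"
  obtain R where R: "(\<Prod>j\<in>V. D + a j) = P + D * S + D ^ 2 * R"
    using insert.IH unfolding P_def S_def by blast
  have "(\<Sum>j\<in>V. \<Prod>i\<in>insert x V - {j}. a i) = (\<Sum>j\<in>V. a x * (\<Prod>i\<in>V - {j}. a i))"
  proof (rule sum.cong)
    fix j assume "j \<in> V"
    then have "insert x V - {j} = insert x (V - {j})" using insert.hyps by auto
    then show "(\<Prod>i\<in>insert x V - {j}. a i) = a x * (\<Prod>i\<in>V - {j}. a i)"
      using insert.hyps by simp
  qed simp
  then have S': "(\<Sum>j\<in>insert x V. \<Prod>i\<in>insert x V - {j}. a i) = P + a x * S"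
    using insert.hyps by (simp add: P_def S_def sum_distrib_left)
  have "(\<Prod>j\<in>insert x V. D + a j) = (D + a x) * (P + D * S + D ^ 2 * R)"
    using insert.hyps R by simp
  also have "\<dots> = a x * P + D * (P + a x * S) + D ^ 2 * (S + D * R + a x * R)"
    by (simp add: algebra_simps power2_eq_square)
  finally show ?case
    using insert.hyps S' unfolding P_def by auto
qed

lemma coprime_upto_reflect:
  assumes "p dvd q" "j \<in> coprime_upto p q"
  shows "j < q" "q - j \<in> coprime_upto p q"
proof -
  show "j < q" using assms by (auto simp: coprime_upto_def le_less)
  moreover have "\<not> p dvd q - j"
  proof
    assume "p dvd q - j"
    then have "p dvd q - (q - j)" using assms(1) by (simp add: dvd_diff_nat)
    then show False using assms(2) \<open>j < q\<close> by (simp add: coprime_upto_def)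
  qed
  ultimately show "q - j \<in> coprime_upto p q" by (simp add: coprime_upto_def)
qed

lemma reflect_mem_lower_half:
  assumes "p dvd q" "j \<in> coprime_upto p q" "2 * j \<noteq> q" "\<not> 2 * j < q"
  shows "q - j \<in> lower_half p q"
  using coprime_upto_reflect[OF assms(1,2)] assms(3,4) by (simp add: lower_half_def)

lemma coprime_upto_split_halves:
  assumes "p dvd q" and no_half: "\<forall>j\<in>coprime_upto p q. 2 * j \<noteq> q"
  shows "coprime_upto p q = lower_half p q \<union> (\<lambda>j. q - j) ` lower_half p q"
    and "lower_half p q \<inter> (\<lambda>j. q - j) ` lower_half p q = {}"
    and "inj_on (\<lambda>j. q - j) (lower_half p q)"
proof -
  show "coprime_upto p q = lower_half p q \<union> (\<lambda>j. q - j) ` lower_half p q"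
  proof (intro equalityI subsetI)
    fix j assume j: "j \<in> coprime_upto p q"
    show "j \<in> lower_half p q \<union> (\<lambda>j. q - j) ` lower_half p q"
    proof (cases "2 * j < q")
      case False
      then have "q - j \<in> lower_half p q"
        using reflect_mem_lower_half assms j by blast
      moreover have "j = q - (q - j)" using coprime_upto_reflect(1)[OF assms(1) j] by simp
      ultimately show ?thesis by blast
    qed (use j in \<open>simp add: lower_half_def\<close>)
  next
    fix j assume "j \<in> lower_half p q \<union> (\<lambda>j. q - j) ` lower_half p q"
    then show "j \<in> coprime_upto p q"
      using coprime_upto_reflect(2)[OF assms(1)] by (auto simp: lower_half_def)
  qed
  show "lower_half p q \<inter> (\<lambda>j. q - j) ` lower_half p q = {}"
    by (auto simp: lower_half_def coprime_upto_def)
  show "inj_on (\<lambda>j. q - j) (lower_half p q)"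
    by (auto simp: lower_half_def coprime_upto_def inj_on_def)
qed

lemma block_prod_eq_prod_pairs:
  assumes "p dvd q" "\<forall>j\<in>coprime_upto p q. 2 * j \<noteq> q"
  shows "block_prod p q t = (\<Prod>j\<in>lower_half p q. (t + j) * (t + (q - j)))"
proof -
  note halves = coprime_upto_split_halves[OF assms]
  have "block_prod p q t = (\<Prod>j\<in>lower_half p q. t + j) * (\<Prod>j\<in>(\<lambda>j. q - j) ` lower_half p q. t + j)"
    unfolding block_prod_def halves(1) by (rule prod.union_disjoint) (simp_all add: halves(2))
  also have "(\<Prod>j\<in>(\<lambda>j. q - j) ` lower_half p q. t + j) = (\<Prod>j\<in>lower_half p q. t + (q - j))"
    by (simp add: prod.reindex[OF halves(3)])
  finally show ?thesis by (simp add: prod.distrib)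
qed

lemma pair_product_shift:
  fixes c q j :: nat
  assumes "j \<le> q"
  shows "(c * q + j) * (c * q + (q - j)) = c * (c + 1) * q ^ 2 + j * (q - j)"
proof -
  obtain r where r: "q = j + r" using le_Suc_ex[OF assms] by blast
  show ?thesis unfolding r by (simp add: power2_eq_square algebra_simps)
qed

text \<open>Pairing \<open>j\<close> with \<open>q - j\<close> makes \<open>block_prod p q (c q)\<close> a polynomial in \<open>c (c + 1) q\<^sup>2\<close>;
  \<open>pair_coeff p q\<close> is its linear coefficient.\<close>

definition pair_coeff :: "nat \<Rightarrow> nat \<Rightarrow> nat" where
  "pair_coeff p q = (\<Sum>j\<in>lower_half p q. \<Prod>i\<in>lower_half p q - {j}. i * (q - i))"

lemma block_prod_expansion:
  assumes "p dvd q" "\<forall>j\<in>coprime_upto p q. 2 * j \<noteq> q"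
  obtains R where "block_prod p q (c * q) = block_prod p q 0
      + c * (c + 1) * q ^ 2 * pair_coeff p q
      + (c * (c + 1) * q ^ 2) ^ 2 * R"
proof -
  have "block_prod p q (c * q) = (\<Prod>j\<in>lower_half p q. c * (c + 1) * q ^ 2 + j * (q - j))"
    unfolding block_prod_eq_prod_pairs[OF assms]
  proof (rule prod.cong)
    fix j assume "j \<in> lower_half p q"
    then have "j \<le> q" by (rule lower_half_le)
    then show "(c * q + j) * (c * q + (q - j)) = c * (c + 1) * q ^ 2 + j * (q - j)"
      by (rule pair_product_shift)
  qed simp
  moreover have "block_prod p q 0 = (\<Prod>j\<in>lower_half p q. j * (q - j))"
    unfolding block_prod_eq_prod_pairs[OF assms] by simp
  ultimately show ?thesis
    using that prod_add_const_expansion[of "lower_half p q" "c * (c + 1) * q ^ 2" "\<lambda>j. j * (q - j)"]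
    unfolding pair_coeff_def by auto
qed

lemma block_prod_cong_mod_square:
  assumes "p dvd q" "\<forall>j\<in>coprime_upto p q. 2 * j \<noteq> q"
  shows "[block_prod p q (c * q) = block_prod p q 0] (mod q ^ 2)"
proof -
  obtain R where "block_prod p q (c * q) = block_prod p q 0
      + c * (c + 1) * q ^ 2 * pair_coeff p q
      + (c * (c + 1) * q ^ 2) ^ 2 * R"
    using block_prod_expansion[OF assms] .
  then have "block_prod p q (c * q) = block_prod p q 0
      + q ^ 2 * (c * (c + 1) * pair_coeff p q + c * (c + 1) * (c * (c + 1) * q ^ 2) * R)"
    by (simp add: algebra_simps power2_eq_square)
  then show ?thesis by (simp add: cong_def)
qed

lemma block_prod_cong_mod_cube:
  assumes "p dvd q" "\<forall>j\<in>coprime_upto p q. 2 * j \<noteq> q"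
    and "q dvd pair_coeff p q"
  shows "[block_prod p q (c * q) = block_prod p q 0] (mod q ^ 3)"
proof -
  obtain s where s: "pair_coeff p q = q * s"
    using assms(3) by blast
  obtain R where "block_prod p q (c * q) = block_prod p q 0
      + c * (c + 1) * q ^ 2 * pair_coeff p q
      + (c * (c + 1) * q ^ 2) ^ 2 * R"
    using block_prod_expansion[OF assms(1,2)] .
  then have "block_prod p q (c * q) = block_prod p q 0 + q ^ 3 * (c * (c + 1) * s + c * (c + 1) * (c * (c + 1) * q) * R)"
    unfolding s by (simp add: algebra_simps power2_eq_square power3_eq_cube)
  then show ?thesis by (simp add: cong_def)
qed

lemma six_times_sum_squares: "6 * (\<Sum>i=1..n. i ^ 2) = n * (n + 1) * (2 * n + 1 :: nat)"
  by (induction n) (auto simp: algebra_simps power2_eq_square)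

lemma dvd_sum_squares:
  fixes n :: nat
  assumes "coprime 6 n"
  shows "n dvd (\<Sum>i=1..n. i ^ 2)"
proof -
  have "n dvd 6 * (\<Sum>i=1..n. i ^ 2)" unfolding six_times_sum_squares by simp
  then show ?thesis using assms by (simp add: coprime_commute coprime_dvd_mult_right_iff)
qed

lemma lower_half_eq_if_cong_pm:
  assumes "j \<in> lower_half p q" "j' \<in> lower_half p q"
    and "[int j = int j'] (mod int q) \<or> [int j = - int j'] (mod int q)"
  shows "j = j'"
proof -
  have bounds: "0 < int j" "2 * int j < int q" "0 < int j'" "2 * int j' < int q"
    using assms(1,2) by (auto simp: lower_half_def coprime_upto_def)
  show ?thesis
    using assms(3)
  proof
    assume "[int j = int j'] (mod int q)"
    then show ?thesis using cong_less_imp_eq_int[of "int j" "int q" "int j'"] bounds by simp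
  next
    assume "[int j = - int j'] (mod int q)"
    then have "int q dvd int j + int j'" by (simp add: cong_iff_dvd_diff)
    then have "int q \<le> int j + int j'" by (rule zdvd_imp_le) (use bounds in simp)
    then show ?thesis using bounds by simp
  qed
qed

lemma cong_pm_if_common_inverse:
  fixes a b r e e' q :: int
  assumes "[a * r = e] (mod q)" "[b * r = e'] (mod q)" "e \<in> {1, -1}" "e' \<in> {1, -1}"
  shows "[a = b] (mod q) \<or> [a = - b] (mod q)"
proof -
  have "[a * e' = a * (b * r)] (mod q)" by (intro cong_mult cong_refl cong_sym[OF assms(2)])
  also have "a * (b * r) = b * (a * r)" by simp
  also have "[\<dots> = b * e] (mod q)" by (intro cong_mult cong_refl assms(1))
  finally have "[a * e' * e' = b * e * e'] (mod q)" by (rule cong_mult) simp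
  moreover have "e' * e' = 1" using assms(4) by auto
  ultimately have "[a = b * (e * e')] (mod q)" by (simp add: mult.assoc)
  moreover have "e * e' = 1 \<or> e * e' = -1" using assms(3,4) by auto
  ultimately show ?thesis by auto
qed

lemma mult_diff_cong_neg_square:
  assumes "j \<le> q"
  shows "[int (j * (q - j)) = - (int j ^ 2)] (mod int q)"
proof -
  have "int (j * (q - j)) - (- (int j ^ 2)) = int q * int j"
    using assms by (simp add: of_nat_diff algebra_simps power2_eq_square)
  then show ?thesis unfolding cong_iff_dvd_diff by (metis dvd_triv_left)
qed

lemma pair_product_inverse_cong:
  assumes "j \<le> q" "r \<le> q" "[int j * int r = e] (mod int q)" "e \<in> {1, -1}"
  shows "[j * (q - j) * (r * (q - r)) = 1] (mod q)"
proof -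
  have "[int (j * (q - j)) * int (r * (q - r)) = (- (int j ^ 2)) * (- (int r ^ 2))] (mod int q)"
    by (intro cong_mult mult_diff_cong_neg_square assms(1,2))
  also have "(- (int j ^ 2)) * (- (int r ^ 2)) = (int j * int r) ^ 2" by (simp add: power_mult_distrib)
  also have "[\<dots> = e ^ 2] (mod int q)" by (intro cong_pow assms(3))
  also have "e ^ 2 = int 1" using assms(4) by auto
  finally show ?thesis by (simp flip: cong_int_iff)
qed

context
  fixes p q s :: nat
  assumes p: "prime p" and p_gt_3: "p > 3" and q: "q = p ^ s" and s: "s \<ge> 1"
begin

lemma p_dvd_q: "p dvd q"
  using q s by simp

lemma odd_q: "odd q"
  using prime_odd_nat[OF p] p_gt_3 q by simp

lemma coprime_6_power: "coprime 6 (p ^ t)"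
proof -
  have "\<not> 3 dvd p"
    using primes_dvd_imp_eq[of 3 p] p p_gt_3 by auto
  then have "coprime 3 p" by (simp add: prime_imp_coprime)
  moreover have "coprime 2 p" using prime_odd_nat[OF p] p_gt_3 by simp
  ultimately have "coprime (2 * 3) p" by (simp only: coprime_mult_left_iff)
  then show ?thesis by simp
qed

lemma no_half_unit: "\<forall>j\<in>coprime_upto p q. 2 * j \<noteq> q"
  using odd_q by auto

lemma dvd_sum_squares_coprime_upto: "q dvd (\<Sum>j\<in>coprime_upto p q. j ^ 2)"
proof -
  define q' where "q' = p ^ (s - 1)"
  have q': "q = p * q'" unfolding q q'_def using s by (cases s) auto
  have "p > 0" using p prime_gt_0_nat by blast
  have range_split: "{1..q} = coprime_upto p q \<union> (\<lambda>i. p * i) ` {1..q'}"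
  proof (intro equalityI subsetI)
    fix j assume j: "j \<in> {1..q}"
    show "j \<in> coprime_upto p q \<union> (\<lambda>i. p * i) ` {1..q'}"
    proof (cases "p dvd j")
      case True
      then obtain i where "j = p * i" by blast
      moreover have "i \<in> {1..q'}" using j q' \<open>p > 0\<close> calculation by auto
      ultimately show ?thesis by blast
    qed (use j in \<open>simp add: coprime_upto_def\<close>)
  qed (use q' \<open>p > 0\<close> in \<open>auto simp: coprime_upto_def\<close>)
  have "(\<Sum>j=1..q. j ^ 2) = (\<Sum>j\<in>coprime_upto p q. j ^ 2) + (\<Sum>j\<in>(\<lambda>i. p * i) ` {1..q'}. j ^ 2)"
    unfolding range_split by (rule sum.union_disjoint) (auto simp: coprime_upto_def)
  also have "(\<Sum>j\<in>(\<lambda>i. p * i) ` {1..q'}. j ^ 2) = p ^ 2 * (\<Sum>i=1..q'. i ^ 2)"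
    using \<open>p > 0\<close> by (subst sum.reindex) (auto simp: inj_on_def sum_distrib_left power_mult_distrib)
  finally have sums: "(\<Sum>j=1..q. j ^ 2) = (\<Sum>j\<in>coprime_upto p q. j ^ 2) + p ^ 2 * (\<Sum>i=1..q'. i ^ 2)" .
  have "q dvd (\<Sum>j=1..q. j ^ 2)"
    using dvd_sum_squares coprime_6_power q by blast
  moreover have "q' dvd (\<Sum>i=1..q'. i ^ 2)"
    using dvd_sum_squares coprime_6_power q'_def by blast
  then have "q dvd p ^ 2 * (\<Sum>i=1..q'. i ^ 2)"
    unfolding q' power2_eq_square by (simp add: mult_dvd_mono)
  ultimately show ?thesis using sums by (simp add: dvd_add_left_iff)
qed

lemma dvd_sum_squares_lower_half: "q dvd (\<Sum>j\<in>lower_half p q. j ^ 2)"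
proof -
  note halves = coprime_upto_split_halves[OF p_dvd_q no_half_unit]
  define S where "S = (\<Sum>j\<in>lower_half p q. j ^ 2)"
  define T where "T = (\<Sum>j\<in>lower_half p q. (q - j) ^ 2)"
  have units: "(\<Sum>j\<in>coprime_upto p q. j ^ 2) = S + T"
    unfolding halves(1) S_def T_def
    by (simp add: sum.union_disjoint halves(2) sum.reindex[OF halves(3)])
  have "(\<Sum>j\<in>lower_half p q. (q - j) ^ 2 + q * (2 * j)) = (\<Sum>j\<in>lower_half p q. q * q + j ^ 2)"
  proof (rule sum.cong)
    fix j assume "j \<in> lower_half p q"
    then obtain r where "q = j + r" using lower_half_le le_Suc_ex by blast
    then show "(q - j) ^ 2 + q * (2 * j) = q * q + j ^ 2" by (simp add: power2_eq_square algebra_simps)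
  qed simp
  then have reflect: "T + q * (\<Sum>j\<in>lower_half p q. 2 * j) = q * (q * card (lower_half p q)) + S"
    unfolding S_def T_def by (simp add: sum.distrib sum_distrib_left)
  have "q dvd (\<Sum>j\<in>coprime_upto p q. j ^ 2) + q * (\<Sum>j\<in>lower_half p q. 2 * j)"
    using dvd_sum_squares_coprime_upto by simp
  also have "(\<Sum>j\<in>coprime_upto p q. j ^ 2) + q * (\<Sum>j\<in>lower_half p q. 2 * j)
      = 2 * S + q * (q * card (lower_half p q))"
    using units reflect by linarith
  finally have "q dvd 2 * S"
    by (simp add: dvd_add_left_iff[OF dvd_triv_left])
  moreover have "coprime q 2" using odd_q by simp
  ultimately show ?thesis unfolding S_def using coprime_dvd_mult_right_iff by blast
qed

lemma dvd_sum_lower_half_products: "q dvd (\<Sum>j\<in>lower_half p q. j * (q - j))"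
proof -
  have "(\<Sum>j\<in>lower_half p q. j * (q - j) + j ^ 2) = (\<Sum>j\<in>lower_half p q. q * j)"
  proof (rule sum.cong)
    fix j assume "j \<in> lower_half p q"
    then obtain r where "q = j + r" using lower_half_le le_Suc_ex by blast
    then show "j * (q - j) + j ^ 2 = q * j" by (simp add: power2_eq_square algebra_simps)
  qed simp
  then have "(\<Sum>j\<in>lower_half p q. j * (q - j)) + (\<Sum>j\<in>lower_half p q. j ^ 2) = q * (\<Sum>j\<in>lower_half p q. j)"
    by (simp add: sum.distrib sum_distrib_left)
  then have "q dvd (\<Sum>j\<in>lower_half p q. j * (q - j)) + (\<Sum>j\<in>lower_half p q. j ^ 2)"
    by simp
  then show ?thesis
    using dvd_sum_squares_lower_half by (simp add: dvd_add_left_iff)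
qed

lemma coprime_upto_inverse:
  assumes "j \<in> coprime_upto p q"
  obtains r where "r \<in> coprime_upto p q" "[j * r = 1] (mod q)"
proof -
  have "q > 1" using q s prime_gt_1_nat[OF p] one_less_power[of p s] by simp
  have "coprime j p" using assms p by (metis coprime_commute prime_imp_coprime mem_Collect_eq coprime_upto_def)
  then have "coprime j q" unfolding q by simp
  then obtain x where x: "[j * x = 1] (mod q)" using cong_solve_coprime_nat by auto
  define r where "r = x mod q"
  have r: "[j * r = 1] (mod q)"
    using x unfolding r_def by (metis cong_def mod_mult_right_eq)
  have "r \<noteq> 0"
  proof
    assume "r = 0"
    then show False using r \<open>q > 1\<close> by (simp add: cong_def)
  qed
  moreover have "r \<le> q" using \<open>q > 1\<close> unfolding r_def by (simp add: less_imp_le)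
  moreover have "\<not> p dvd r"
  proof
    assume "p dvd r"
    then have "p dvd j * r" by simp
    moreover have "[j * r = 1] (mod p)" using cong_dvd_modulus_nat[OF r p_dvd_q] .
    ultimately have "p dvd 1" using cong_dvd_iff by blast
    then show False using p by simp
  qed
  ultimately have "r \<in> coprime_upto p q" by (simp add: coprime_upto_def)
  then show ?thesis using r by (rule that)
qed

lemma lower_half_inverse:
  assumes "j \<in> lower_half p q"
  shows "\<exists>r\<in>lower_half p q. \<exists>e\<in>{1, -1}. [int j * int r = e] (mod int q)"
proof -
  obtain r where r: "r \<in> coprime_upto p q" "[j * r = 1] (mod q)"
    using coprime_upto_inverse assms by (auto simp: lower_half_def)
  then have r_int: "[int j * int r = 1] (mod int q)" by (simp flip: cong_int_iff)
  show ?thesis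
  proof (cases "2 * r < q")
    case True
    then show ?thesis using r r_int by (auto simp: lower_half_def)
  next
    case False
    then have "q - r \<in> lower_half p q"
      using reflect_mem_lower_half[OF p_dvd_q r(1)] no_half_unit r(1) by blast
    moreover have "[int j * int (q - r) = -1] (mod int q)"
    proof -
      have "int j * int (q - r) = int j * int q - int j * int r"
        using coprime_upto_reflect(1)[OF p_dvd_q r(1)] by (simp add: of_nat_diff algebra_simps)
      moreover have "[int j * int q - int j * int r = 0 - 1] (mod int q)"
        by (intro cong_diff r_int) (simp add: cong_def)
      ultimately show ?thesis by simp
    qed
    ultimately show ?thesis by blast
  qed
qed

text \<open>Modulo \<open>q\<close>, each \<open>j (q - j)\<close> is \<open>-j\<^sup>2\<close>, so \<open>pair_coeff p q\<close> is the full product times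
  \<open>\<Sum> (-j\<^sup>2)\<^sup>-\<^sup>1\<close>; the map \<open>j \<mapsto> \<plusminus>j\<^sup>-\<^sup>1\<close> permutes \<open>lower_half p q\<close>, turning this into
  \<open>\<Sum> j (q - j)\<close>, which \<open>q\<close> divides.\<close>

lemma dvd_pair_coeff: "q dvd pair_coeff p q"
proof -
  define V where "V = lower_half p q"
  define a where "a i = i * (q - i)" for i
  have "\<forall>j\<in>V. \<exists>r. r \<in> V \<and> (\<exists>e\<in>{1, -1}. [int j * int r = e] (mod int q))"
    using lower_half_inverse unfolding V_def by blast
  then obtain recip where recip: "\<And>j. j \<in> V \<Longrightarrow> recip j \<in> V \<and> (\<exists>e\<in>{1, -1}. [int j * int (recip j) = e] (mod int q))"
    by metis
  have "inj_on recip V"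
  proof (rule inj_onI)
    fix j j' assume j: "j \<in> V" and j': "j' \<in> V" and "recip j = recip j'"
    obtain e e' where "e \<in> {1, -1}" "[int j * int (recip j) = e] (mod int q)"
      and "e' \<in> {1, -1}" "[int j' * int (recip j) = e'] (mod int q)"
      using recip[OF j] recip[OF j'] \<open>recip j = recip j'\<close> by auto
    then have "[int j = int j'] (mod int q) \<or> [int j = - int j'] (mod int q)"
      by (intro cong_pm_if_common_inverse)
    then show "j = j'"
      using lower_half_eq_if_cong_pm j j' unfolding V_def by blast
  qed
  moreover have "recip ` V = V"
    using endo_inj_surj[OF finite_lower_half[of p q, folded V_def] _ \<open>inj_on recip V\<close>] recip by blast
  ultimately have sum_inv: "(\<Sum>j\<in>V. a (recip j)) = (\<Sum>j\<in>V. a j)"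
    using sum.reindex[of recip V a] by simp
  define P where "P = (\<Prod>i\<in>V. a i)"
  have remove: "[(\<Prod>i\<in>V - {j}. a i) = P * a (recip j)] (mod q)" if j: "j \<in> V" for j
  proof -
    obtain e where e: "e \<in> {1, -1}" "[int j * int (recip j) = e] (mod int q)"
      using recip[OF j] by blast
    have "j \<le> q" "recip j \<le> q"
      using j recip[OF j] lower_half_le unfolding V_def by auto
    then have "[a j * a (recip j) = 1] (mod q)"
      unfolding a_def by (rule pair_product_inverse_cong[OF _ _ e(2) e(1)])
    then have "[(\<Prod>i\<in>V - {j}. a i) * (a j * a (recip j)) = (\<Prod>i\<in>V - {j}. a i) * 1] (mod q)"
      by (intro cong_mult cong_refl)
    moreover have "P = a j * (\<Prod>i\<in>V - {j}. a i)"
      unfolding P_def using j by (simp add: prod.remove V_def)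
    ultimately show ?thesis by (simp add: ac_simps cong_sym_eq)
  qed
  have "[pair_coeff p q = (\<Sum>j\<in>V. P * a (recip j))] (mod q)"
    unfolding pair_coeff_def V_def[symmetric] a_def[symmetric] by (rule cong_sum) (use remove in blast)
  also have "(\<Sum>j\<in>V. P * a (recip j)) = P * (\<Sum>j\<in>V. a j)"
    by (simp flip: sum_distrib_left sum_inv)
  also have "[\<dots> = P * 0] (mod q)"
    using dvd_sum_lower_half_products by (intro cong_mult cong_refl) (simp add: cong_0_iff V_def a_def)
  finally show ?thesis by (simp add: cong_0_iff)
qed

end

lemma no_half_unit_prime_power:
  assumes "prime p" "odd p \<or> 2 \<le> s"
  shows "\<forall>j\<in>coprime_upto p (p ^ s). 2 * j \<noteq> p ^ s"
proof (intro ballI notI)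
  fix j assume j: "j \<in> coprime_upto p (p ^ s)" and half: "2 * j = p ^ s"
  have "s \<noteq> 0"
  proof
    assume "s = 0"
    with half have "2 * j = 1" by simp
    then show False by presburger
  qed
  with half have "even p" by (metis dvd_triv_left even_power neq0_conv)
  then have "p = 2"
    using prime_ge_2_nat[OF assms(1)] prime_odd_nat[OF assms(1)] by force
  have "2 \<le> s" using assms(2) \<open>even p\<close> by simp
  then obtain r where "s = r + 2" by (metis le_add_diff_inverse2)
  then have "j = 2 * 2 ^ r" using half \<open>p = 2\<close> by simp
  then show False using j \<open>p = 2\<close> by (simp add: coprime_upto_def)
qed

lemma binomial_prime_power_step_cong_mod:
  assumes "prime p" "s \<ge> 1" "y \<le> x"
  shows "[(x * p ^ s) choose (y * p ^ s) = (x * p ^ (s - 1)) choose (y * p ^ (s - 1))] (mod p ^ s)"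
  using assms block_prod_cong_mod by (rule binomial_prime_power_step_cong)

lemma binomial_prime_power_step_cong_mod_square:
  assumes "prime p" "s \<ge> 1" "odd p \<or> 2 \<le> s" "y \<le> x"
  shows "[(x * p ^ s) choose (y * p ^ s) = (x * p ^ (s - 1)) choose (y * p ^ (s - 1))] (mod p ^ (2 * s))"
proof (rule binomial_prime_power_step_cong[OF assms(1,2,4)])
  fix c
  have "p dvd p ^ s" using \<open>s \<ge> 1\<close> by simp
  then have "[block_prod p (p ^ s) (c * p ^ s) = block_prod p (p ^ s) 0] (mod (p ^ s) ^ 2)"
    using no_half_unit_prime_power[OF assms(1,3)] by (rule block_prod_cong_mod_square)
  then show "[block_prod p (p ^ s) (c * p ^ s) = block_prod p (p ^ s) 0] (mod p ^ (2 * s))"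
    by (simp add: power_mult[symmetric] mult.commute)
qed

lemma binomial_prime_power_step_cong_mod_cube:
  assumes "prime p" "p > 3" "s \<ge> 1" "y \<le> x"
  shows "[(x * p ^ s) choose (y * p ^ s) = (x * p ^ (s - 1)) choose (y * p ^ (s - 1))] (mod p ^ (3 * s))"
proof (rule binomial_prime_power_step_cong[OF assms(1,3,4)])
  fix c
  have "[block_prod p (p ^ s) (c * p ^ s) = block_prod p (p ^ s) 0] (mod (p ^ s) ^ 3)"
    using assms(1-3) by (intro block_prod_cong_mod_cube p_dvd_q no_half_unit dvd_pair_coeff) simp_all
  then show "[block_prod p (p ^ s) (c * p ^ s) = block_prod p (p ^ s) 0] (mod p ^ (3 * s))"
    by (simp add: power_mult[symmetric] mult.commute)
qed

lemma cong_telescope: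
  fixes B :: "nat \<Rightarrow> nat"
  assumes "j \<le> k" and "\<And>t. j < t \<Longrightarrow> t \<le> k \<Longrightarrow> [B t = B (t - 1)] (mod M)"
  shows "[B k = B j] (mod M)"
  using assms
proof (induction k)
  case (Suc k)
  show ?case
  proof (cases "j = Suc k")
    case False
    then have "[B k = B j] (mod M)" using Suc by simp
    moreover have "j < Suc k" using Suc.prems(1) False by simp
    then have "[B (Suc k) = B k] (mod M)" using Suc.prems(2)[of "Suc k"] by simp
    ultimately show ?thesis by (rule cong_trans[rotated])
  qed simp
qed simp

lemma binomial_scaled_cong_iterate:
  assumes "j \<le> k"
    and "\<And>t. j < t \<Longrightarrow> t \<le> k \<Longrightarrow>
      [(n * p ^ t) choose (m * p ^ t) = (n * p ^ (t - 1)) choose (m * p ^ (t - 1))] (mod p ^ (e * t))"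
  shows "[(n * p ^ k) choose (m * p ^ k) = (n * p ^ j) choose (m * p ^ j)] (mod p ^ (e * (j + 1)))"
proof (rule cong_telescope[where B = "\<lambda>t. (n * p ^ t) choose (m * p ^ t)", OF \<open>j \<le> k\<close>])
  fix t assume "j < t" "t \<le> k"
  then have "p ^ (e * (j + 1)) dvd p ^ (e * t)" by (intro le_imp_power_dvd mult_le_mono2) simp
  then show "[(n * p ^ t) choose (m * p ^ t) = (n * p ^ (t - 1)) choose (m * p ^ (t - 1))] (mod p ^ (e * (j + 1)))"
    using assms(2)[OF \<open>j < t\<close> \<open>t \<le> k\<close>] by (rule cong_dvd_modulus_nat[rotated])
qed

theorem mainTheorem2:
  fixes n m k :: nat
  assumes "m \<le> n" and "k \<ge> 1"
  shows "(\<forall>p::nat. prime p \<and> p > 3 \<longrightarrow>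
           [(n * p ^ k) choose (m * p ^ k)
              = (n * p ^ ((k - 1) div 3)) choose (m * p ^ ((k - 1) div 3))] (mod p ^ k))
       \<and> [(n * 2 ^ k) choose (m * 2 ^ k)
              = (n * 2 ^ (k div 2)) choose (m * 2 ^ (k div 2))] (mod 2 ^ k)
       \<and> [(n * 3 ^ k) choose (m * 3 ^ k)
              = (n * 3 ^ ((k - 1) div 2)) choose (m * 3 ^ ((k - 1) div 2))] (mod 3 ^ k)"
proof (intro conjI allI impI)
  fix p :: nat assume "prime p \<and> p > 3"
  then have "[(n * p ^ k) choose (m * p ^ k) = (n * p ^ ((k - 1) div 3)) choose (m * p ^ ((k - 1) div 3))]
      (mod p ^ (3 * ((k - 1) div 3 + 1)))"
    using assms(1) by (intro binomial_scaled_cong_iterate binomial_prime_power_step_cong_mod_cube) auto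
  moreover have "p ^ k dvd p ^ (3 * ((k - 1) div 3 + 1))" by (intro le_imp_power_dvd) presburger
  ultimately show "[(n * p ^ k) choose (m * p ^ k)
      = (n * p ^ ((k - 1) div 3)) choose (m * p ^ ((k - 1) div 3))] (mod p ^ k)"
    by (rule cong_dvd_modulus_nat)
next
  show "[(n * 2 ^ k) choose (m * 2 ^ k) = (n * 2 ^ (k div 2)) choose (m * 2 ^ (k div 2))] (mod 2 ^ k)"
  proof (cases "k = 1")
    case True
    then show ?thesis using binomial_prime_power_step_cong_mod[OF two_is_prime_nat _ assms(1), of 1] by simp
  next
    case False
    then have "[(n * 2 ^ k) choose (m * 2 ^ k) = (n * 2 ^ (k div 2)) choose (m * 2 ^ (k div 2))]
        (mod 2 ^ (2 * (k div 2 + 1)))"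
      using assms by (intro binomial_scaled_cong_iterate binomial_prime_power_step_cong_mod_square) auto
    moreover have "(2::nat) ^ k dvd 2 ^ (2 * (k div 2 + 1))" by (intro le_imp_power_dvd) presburger
    ultimately show ?thesis by (rule cong_dvd_modulus_nat)
  qed
next
  have "[(n * 3 ^ k) choose (m * 3 ^ k) = (n * 3 ^ ((k - 1) div 2)) choose (m * 3 ^ ((k - 1) div 2))]
      (mod 3 ^ (2 * ((k - 1) div 2 + 1)))"
    using assms(1) by (intro binomial_scaled_cong_iterate binomial_prime_power_step_cong_mod_square) auto
  moreover have "(3::nat) ^ k dvd 3 ^ (2 * ((k - 1) div 2 + 1))" by (intro le_imp_power_dvd) presburger
  ultimately show "[(n * 3 ^ k) choose (m * 3 ^ k)
      = (n * 3 ^ ((k - 1) div 2)) choose (m * 3 ^ ((k - 1) div 2))] (mod 3 ^ k)"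
    by (rule cong_dvd_modulus_nat)
qed

end
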